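(* Let $M,N$ be sharp, integral monoids, $\Gamma$ an $M$-metrised graph, $f:M\to N$ an injective monoid homomorphism with edge contraction $\Gamma'$ of $\Gamma$ along $f$, and $D\in\operatorname{Div}(\Gamma)$. Then $r(f_*(D))=r(D)$.
   Context: Monoids are commutative, sharp (only unit $0$), integral (cancellative), with groupification; $\langle m\rangle=\{km:k\in\mathbb Z\}$ and for $x=km$, $m\ne0$, $x/m:=k$. A graph is $(X,r,i)$, $X$ finite, $r$ idempotent, $i$ an involution, $i(x)=x\iff r(x)=x$; vertices $V$ = fixed points, half-edges $H=X\setminus V$, edges $\{e,i(e)\}$ joining $r(e),r(i(e))$, $H_v=\{e\in H:r(e)=v\}$; graphs are connected. An $M$-metrised graph adds $l:X\to M$ with $l(i(x))=l(x)$, $l(x)=0\iff x\in V$. Divisors: free abelian group on $V$, pointwise order; $\operatorname{Div}^k_+$ = effective divisors of degree $k$. $\operatorname{PL}(\Gamma)=\{g:V\to M^{gp}: g(r(e))-g(r(i(e)))\in\langle l(e)\rangle\ \forall e\in H\}$; $\Delta(g)=\sum_{v}\big(\sum_{e\in H_v}\frac{g(v)-g(r(i(e)))}{l(e)}\big)[v]$; $D\sim D'$ iff $D-D'\in\Delta(\operatorname{PL}(\Gamma))$; $|D|=\{E\ge0:E\sim D\}$; $r(D)=\max\{k\in\mathbb Z:|D-F|\ne\emptyset\ \forall F\in\operatorname{Div}^k_+(\Gamma)\}$. The edge contraction of $\Gamma$ along $f$ is the $N$-metrised graph $\Gamma'$ obtained as the quotient of $X$ by the equivalence relation generated by $e\sim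 r(e)\sim i(e)\sim r(i(e))$ for every $e\in H$ with $f(l(e))=0$, with induced $r,i$ and length $f\circ l$; $\varphi$ is the quotient map and $f_*(D)=\sum_{v}D(v)[\varphi(v)]$. *)

theory Defs
  imports Main
begin

text \<open>An integral commutative monoid embeds in its groupification; we represent it
as a subset M of an ambient abelian group containing 0 and closed under +.
Integrality is then automatic; sharpness means 0 is the only unit.\<close>

definition sharp_integral_monoid :: "'g::ab_group_add set \<Rightarrow> bool" where
  "sharp_integral_monoid M \<longleftrightarrow> 0 \<in> M \<and> (\<forall>a\<in>M. \<forall>b\<in>M. a + b \<in> M)
     \<and> (\<forall>a\<in>M. \<forall>b\<in>M. a + b = 0 \<longrightarrow> a = 0)"

definition gp :: "'g::ab_group_add set \<Rightarrow> 'g set" where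
  "gp M = {a - b | a b. a \<in> M \<and> b \<in> M}"

definition monoid_hom :: "'g::ab_group_add set \<Rightarrow> 'h::ab_group_add set \<Rightarrow> ('g \<Rightarrow> 'h) \<Rightarrow> bool" where
  "monoid_hom M N f \<longleftrightarrow> f ` M \<subseteq> N \<and> f 0 = 0 \<and> (\<forall>a\<in>M. \<forall>b\<in>M. f (a + b) = f a + f b)"

definition zmult :: "int \<Rightarrow> 'g::ab_group_add \<Rightarrow> 'g" where
  "zmult k m = (if 0 \<le> k then (\<Sum>_\<in>{..<nat k}. m) else - (\<Sum>_\<in>{..<nat (-k)}. m))"

definition cyc :: "'g::ab_group_add \<Rightarrow> 'g set" where
  "cyc m = {zmult k m | k. True}"

definition zdiv :: "'g::ab_group_add \<Rightarrow> 'g \<Rightarrow> int" where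
  "zdiv x m = (THE k. x = zmult k m)"

definition verts :: "'a set \<Rightarrow> ('a \<Rightarrow> 'a) \<Rightarrow> 'a set" where
  "verts X r = {x \<in> X. r x = x}"

definition hedges :: "'a set \<Rightarrow> ('a \<Rightarrow> 'a) \<Rightarrow> 'a set" where
  "hedges X r = X - verts X r"

definition is_graph :: "'a set \<Rightarrow> ('a \<Rightarrow> 'a) \<Rightarrow> ('a \<Rightarrow> 'a) \<Rightarrow> bool" where
  "is_graph X r i \<longleftrightarrow> finite X \<and> r ` X \<subseteq> X \<and> i ` X \<subseteq> X
     \<and> (\<forall>x\<in>X. r (r x) = r x) \<and> (\<forall>x\<in>X. i (i x) = x)
     \<and> (\<forall>x\<in>X. i x = x \<longleftrightarrow> r x = x)
     \<and> (\<forall>v\<in>verts X r. \<forall>w\<in>verts X r.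
          (v, w) \<in> {(r e, r (i e)) | e. e \<in> hedges X r}\<^sup>*)"

definition metrised :: "'g::ab_group_add set \<Rightarrow> 'a set \<Rightarrow> ('a \<Rightarrow> 'a) \<Rightarrow> ('a \<Rightarrow> 'a) \<Rightarrow> ('a \<Rightarrow> 'g) \<Rightarrow> bool" where
  "metrised M X r i l \<longleftrightarrow> is_graph X r i \<and> (\<forall>x\<in>X. l x \<in> M)
     \<and> (\<forall>x\<in>X. l (i x) = l x) \<and> (\<forall>x\<in>X. l x = 0 \<longleftrightarrow> x \<in> verts X r)"

definition divisors :: "'a set \<Rightarrow> ('a \<Rightarrow> 'a) \<Rightarrow> ('a \<Rightarrow> int) set" where
  "divisors X r = {D. \<forall>x. x \<notin> verts X r \<longrightarrow> D x = 0}"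

definition deg :: "'a set \<Rightarrow> ('a \<Rightarrow> 'a) \<Rightarrow> ('a \<Rightarrow> int) \<Rightarrow> int" where
  "deg X r D = (\<Sum>v\<in>verts X r. D v)"

definition eff_divs :: "'a set \<Rightarrow> ('a \<Rightarrow> 'a) \<Rightarrow> int \<Rightarrow> ('a \<Rightarrow> int) set" where
  "eff_divs X r k = {F \<in> divisors X r. (\<forall>v. 0 \<le> F v) \<and> deg X r F = k}"

definition PL :: "'g::ab_group_add set \<Rightarrow> 'a set \<Rightarrow> ('a \<Rightarrow> 'a) \<Rightarrow> ('a \<Rightarrow> 'a) \<Rightarrow> ('a \<Rightarrow> 'g) \<Rightarrow> ('a \<Rightarrow> 'g) set" where
  "PL M X r i l = {g. (\<forall>v\<in>verts X r. g v \<in> gp M) \<and> (\<forall>x. x \<notin> verts X r \<longrightarrow> g x = 0)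
      \<and> (\<forall>e\<in>hedges X r. g (r e) - g (r (i e)) \<in> cyc (l e))}"

definition laplacian :: "'a set \<Rightarrow> ('a \<Rightarrow> 'a) \<Rightarrow> ('a \<Rightarrow> 'a) \<Rightarrow> ('a \<Rightarrow> 'g::ab_group_add) \<Rightarrow> ('a \<Rightarrow> 'g) \<Rightarrow> 'a \<Rightarrow> int" where
  "laplacian X r i l g = (\<lambda>v. if v \<in> verts X r
      then (\<Sum>e\<in>{e \<in> hedges X r. r e = v}. zdiv (g v - g (r (i e))) (l e)) else 0)"

definition lin_equiv :: "'g::ab_group_add set \<Rightarrow> 'a set \<Rightarrow> ('a \<Rightarrow> 'a) \<Rightarrow> ('a \<Rightarrow> 'a) \<Rightarrow> ('a \<Rightarrow> 'g) \<Rightarrow> ('a \<Rightarrow> int) \<Rightarrow> ('a \<Rightarrow> int) \<Rightarrow> bool" where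
  "lin_equiv M X r i l D D' \<longleftrightarrow> D - D' \<in> laplacian X r i l ` PL M X r i l"

definition lin_sys :: "'g::ab_group_add set \<Rightarrow> 'a set \<Rightarrow> ('a \<Rightarrow> 'a) \<Rightarrow> ('a \<Rightarrow> 'a) \<Rightarrow> ('a \<Rightarrow> 'g) \<Rightarrow> ('a \<Rightarrow> int) \<Rightarrow> ('a \<Rightarrow> int) set" where
  "lin_sys M X r i l D = {E \<in> divisors X r. (\<forall>v. 0 \<le> E v) \<and> lin_equiv M X r i l E D}"

definition rank :: "'g::ab_group_add set \<Rightarrow> 'a set \<Rightarrow> ('a \<Rightarrow> 'a) \<Rightarrow> ('a \<Rightarrow> 'a) \<Rightarrow> ('a \<Rightarrow> 'g) \<Rightarrow> ('a \<Rightarrow> int) \<Rightarrow> int" where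
  "rank M X r i l D = (GREATEST k::int. \<forall>F\<in>eff_divs X r k. lin_sys M X r i l (D - F) \<noteq> {})"

definition contr_rel :: "('g \<Rightarrow> 'h::zero) \<Rightarrow> 'a set \<Rightarrow> ('a \<Rightarrow> 'a) \<Rightarrow> ('a \<Rightarrow> 'a) \<Rightarrow> ('a \<Rightarrow> 'g) \<Rightarrow> 'a rel" where
  "contr_rel f X r i l =
    (let B = (\<Union>e\<in>{e \<in> hedges X r. f (l e) = 0}. {(e, r e), (e, i e), (e, r (i e))})
     in (B \<union> B\<inverse> \<union> Id_on X)\<^sup>*)"

definition contr_phi :: "('g \<Rightarrow> 'h::zero) \<Rightarrow> 'a set \<Rightarrow> ('a \<Rightarrow> 'a) \<Rightarrow> ('a \<Rightarrow> 'a) \<Rightarrow> ('a \<Rightarrow> 'g) \<Rightarrow> 'a \<Rightarrow> 'a set" where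
  "contr_phi f X r i l x = contr_rel f X r i l `` {x}"

definition contr_X :: "('g \<Rightarrow> 'h::zero) \<Rightarrow> 'a set \<Rightarrow> ('a \<Rightarrow> 'a) \<Rightarrow> ('a \<Rightarrow> 'a) \<Rightarrow> ('a \<Rightarrow> 'g) \<Rightarrow> 'a set set" where
  "contr_X f X r i l = X // contr_rel f X r i l"

definition contr_r :: "('g \<Rightarrow> 'h::zero) \<Rightarrow> 'a set \<Rightarrow> ('a \<Rightarrow> 'a) \<Rightarrow> ('a \<Rightarrow> 'a) \<Rightarrow> ('a \<Rightarrow> 'g) \<Rightarrow> 'a set \<Rightarrow> 'a set" where
  "contr_r f X r i l c = contr_phi f X r i l (r (SOME x. x \<in> c))"

definition contr_i :: "('g \<Rightarrow> 'h::zero) \<Rightarrow> 'a set \<Rightarrow> ('a \<Rightarrow> 'a) \<Rightarrow> ('a \<Rightarrow> 'a) \<Rightarrow> ('a \<Rightarrow> 'g) \<Rightarrow> 'a set \<Rightarrow> 'a set" where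
  "contr_i f X r i l c = contr_phi f X r i l (i (SOME x. x \<in> c))"

definition contr_l :: "('g \<Rightarrow> 'h::zero) \<Rightarrow> 'a set \<Rightarrow> ('a \<Rightarrow> 'a) \<Rightarrow> ('a \<Rightarrow> 'a) \<Rightarrow> ('a \<Rightarrow> 'g) \<Rightarrow> 'a set \<Rightarrow> 'h" where
  "contr_l f X r i l c = f (l (SOME x. x \<in> c))"

definition push :: "('g \<Rightarrow> 'h::zero) \<Rightarrow> 'a set \<Rightarrow> ('a \<Rightarrow> 'a) \<Rightarrow> ('a \<Rightarrow> 'a) \<Rightarrow> ('a \<Rightarrow> 'g) \<Rightarrow> ('a \<Rightarrow> int) \<Rightarrow> 'a set \<Rightarrow> int" where
  "push f X r i l D c = (\<Sum>v\<in>{v \<in> verts X r. contr_phi f X r i l v = c}. D v)"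

end

theory Submission
  imports Defs
begin

text \<open>Since \<open>f\<close> is injective and half-edges have nonzero length, the contraction along \<open>f\<close>
  contracts nothing: \<open>\<Gamma>'\<close> is \<open>\<Gamma>\<close> with every element \<open>x\<close> renamed to \<open>{x}\<close> and with lengths
  \<open>f \<circ> l\<close>, and \<open>f\<^sub>*\<close> is the corresponding renaming of divisors. Renaming clearly preserves
  ranks. Replacing \<open>l\<close> by \<open>f \<circ> l\<close> does not change the group of principal divisors either:
  a PL function for \<open>l\<close> is pushed forward by the extension of \<open>f\<close> to the groupification,
  which keeps the integer slopes; conversely a PL function for \<open>f \<circ> l\<close>, normalised at a base
  vertex, takes values in the image of that extension because the graph is connected and each
  edge changes the value by an integer multiple of some \<open>f (l e)\<close>, and injectivity of the
  extension recovers a PL function for \<open>l\<close> with the same slopes, hence the same Laplacian.\<close>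

section \<open>Integer multiples\<close>

lemma zmult_0 [simp]: "zmult 0 m = 0"
  by (simp add: zmult_def)

lemma zmult_plus_1: "zmult (k + 1) m = zmult k m + m"
proof (cases "k \<ge> 0")
  case True
  then have "nat (k + 1) = Suc (nat k)" by simp
  with True show ?thesis by (simp add: zmult_def add.commute)
next
  case False
  show ?thesis
  proof (cases "k = -1")
    case True then show ?thesis by (simp add: zmult_def)
  next
    case k: False
    then have "\<not> 0 \<le> k + 1" "nat (-(k + 1)) = nat (-k - 1)" "nat (-k) = Suc (nat (-k - 1))"
      using False by auto
    with False show ?thesis by (simp add: zmult_def)
  qed
qed

lemma zmult_minus_1: "zmult (k - 1) m = zmult k m - m"
  using zmult_plus_1[of "k - 1" m] by (simp add: algebra_simps)

lemma zmult_add: "zmult (a + b) m = zmult a m + zmult b m"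
proof (induction b rule: int_induct[where k = 0])
  case base then show ?case by simp
next
  case (step1 b) then show ?case
    using zmult_plus_1[of "a + b" m] zmult_plus_1[of b m] by (simp add: algebra_simps)
next
  case (step2 b)
  have "zmult (a + (b - 1)) m = zmult (a + b) m - m"
    using zmult_minus_1[of "a + b" m] by (simp add: algebra_simps)
  also have "\<dots> = zmult a m + zmult (b - 1) m"
    using step2 zmult_minus_1[of b m] by (simp add: algebra_simps)
  finally show ?case .
qed

lemma zmult_uminus: "zmult (- k) m = - zmult k m"
  using zmult_add[of k "- k" m] by (simp add: eq_neg_iff_add_eq_0 add.commute)

lemma zmult_diff: "zmult (a - b) m = zmult a m - zmult b m"
  using zmult_add[of a "- b" m] zmult_uminus[of b m] by simp

lemma zmult_mem_and_additive:
  assumes G: "0 \<in> G" "\<And>x y. x \<in> G \<Longrightarrow> y \<in> G \<Longrightarrow> x + y \<in> G" "\<And>x. x \<in> G \<Longrightarrow> - x \<in> G"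
    and h: "\<And>x y. x \<in> G \<Longrightarrow> y \<in> G \<Longrightarrow> h (x + y) = h x + h y"
    and m: "m \<in> G"
  shows "zmult k m \<in> G \<and> h (zmult k m) = zmult k (h m)"
proof -
  have h0: "h 0 = 0" using h[OF G(1) G(1)] by simp
  have h_uminus: "h (- x) = - h x" if "x \<in> G" for x
    using h[OF that G(3)[OF that]] h0 by (simp add: eq_neg_iff_add_eq_0 add.commute)
  show ?thesis
  proof (induction k rule: int_induct[where k = 0])
    case base then show ?case using G(1) h0 by simp
  next
    case (step1 k) then show ?case using zmult_plus_1[of k m] zmult_plus_1[of k "h m"] G(2) m h by simp
  next
    case (step2 k)
    have "zmult (k - 1) m = zmult k m + - m"
      using zmult_minus_1[of k] by simp
    moreover have "zmult k m + - m \<in> G"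
      using step2 G(2,3) m by blast
    moreover have "h (zmult k m + - m) = zmult (k - 1) (h m)"
      using step2 h[of "zmult k m" "- m"] G(3) m h_uminus[OF m] zmult_minus_1[of k "h m"] by simp
    ultimately show ?case by metis
  qed
qed

lemma sharp_integral_monoidD:
  assumes "sharp_integral_monoid M"
  shows "0 \<in> M" "a \<in> M \<Longrightarrow> b \<in> M \<Longrightarrow> a + b \<in> M" "a \<in> M \<Longrightarrow> b \<in> M \<Longrightarrow> a + b = 0 \<Longrightarrow> a = 0"
  using assms by (auto simp: sharp_integral_monoid_def)

lemma sum_const_mem:
  fixes n :: nat
  assumes "sharp_integral_monoid M" "m \<in> M"
  shows "(\<Sum>_\<in>{..<n}. m) \<in> M"
  by (induction n) (simp_all add: assms sharp_integral_monoidD)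

text \<open>Sharpness makes every nonzero element of \<open>M\<close> torsion free in the groupification.\<close>

lemma zmult_eq_0_imp:
  assumes M: "sharp_integral_monoid M" and m: "m \<in> M" "m \<noteq> 0" and z: "zmult k m = 0"
  shows "k = 0"
proof (rule ccontr)
  assume "k \<noteq> 0"
  then obtain n where n: "nat \<bar>k\<bar> = Suc n"
    by (metis gr0_implies_Suc nat_0_iff zero_less_abs_iff zero_less_nat_eq)
  have "(\<Sum>_\<in>{..<Suc n}. m) = 0"
    using z n by (cases "k \<ge> 0") (simp_all add: zmult_def)
  then have "m + (\<Sum>_\<in>{..<n}. m) = 0" by (simp add: add.commute)
  then have "m = 0" by (rule sharp_integral_monoidD(3)[OF M m(1) sum_const_mem[OF M m(1)]])
  with m show False by simp
qed

lemma zmult_inj: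
  assumes "sharp_integral_monoid M" "m \<in> M" "m \<noteq> 0" "zmult a m = zmult b m"
  shows "a = b"
  using zmult_eq_0_imp[OF assms(1-3), of "a - b"] assms(4) zmult_diff[of a b m] by simp

lemma zdiv_zmult:
  assumes "sharp_integral_monoid M" "m \<in> M" "m \<noteq> 0"
  shows "zdiv (zmult k m) m = k"
  unfolding zdiv_def by (rule the_equality) (auto dest: zmult_inj[OF assms])

section \<open>Extending an injective homomorphism to the groupification\<close>

lemma subset_gp: "sharp_integral_monoid M \<Longrightarrow> M \<subseteq> gp M"
  unfolding gp_def by (force dest: sharp_integral_monoidD(1))

lemma gp_add:
  assumes "sharp_integral_monoid M" "x \<in> gp M" "y \<in> gp M"
  shows "x + y \<in> gp M"
proof -
  obtain a b c d where "a \<in> M" "b \<in> M" "c \<in> M" "d \<in> M" "x = a - b" "y = c - d"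
    using assms(2,3) unfolding gp_def by blast
  moreover from this have "x + y = (a + c) - (b + d)" by (simp add: algebra_simps)
  ultimately show ?thesis unfolding gp_def using sharp_integral_monoidD(2)[OF assms(1)] by blast
qed

lemma gp_uminus: "x \<in> gp M \<Longrightarrow> - x \<in> gp M"
  unfolding gp_def by force

lemma gp_diff: "sharp_integral_monoid M \<Longrightarrow> x \<in> gp M \<Longrightarrow> y \<in> gp M \<Longrightarrow> x - y \<in> gp M"
  using gp_add gp_uminus by (metis diff_conv_add_uminus)

definition gp_extension :: "'g::ab_group_add set \<Rightarrow> ('g \<Rightarrow> 'h::ab_group_add) \<Rightarrow> 'g \<Rightarrow> 'h" where
  "gp_extension M f x = (THE y. \<exists>a\<in>M. \<exists>b\<in>M. x = a - b \<and> y = f a - f b)"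

locale monoid_embedding =
  fixes M :: "'g::ab_group_add set" and N :: "'h::ab_group_add set" and f :: "'g \<Rightarrow> 'h"
  assumes M: "sharp_integral_monoid M" and N: "sharp_integral_monoid N"
    and hom: "monoid_hom M N f" and inj: "inj_on f M"
begin

abbreviation "f_gp \<equiv> gp_extension M f"

lemma f_add: "a \<in> M \<Longrightarrow> b \<in> M \<Longrightarrow> f (a + b) = f a + f b"
  and f_0: "f 0 = 0"
  and f_mem: "a \<in> M \<Longrightarrow> f a \<in> N"
  using hom by (auto simp: monoid_hom_def)

lemma f_nonzero: "a \<in> M \<Longrightarrow> a \<noteq> 0 \<Longrightarrow> f a \<noteq> 0"
  using inj f_0 sharp_integral_monoidD(1)[OF M] by (metis inj_onD)

lemma gp_extension_diff_eq:
  assumes "a \<in> M" "b \<in> M"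
  shows "f_gp (a - b) = f a - f b"
  unfolding gp_extension_def
proof (rule the_equality)
  show "\<exists>c\<in>M. \<exists>d\<in>M. a - b = c - d \<and> f a - f b = f c - f d" using assms by blast
next
  fix y assume "\<exists>c\<in>M. \<exists>d\<in>M. a - b = c - d \<and> y = f c - f d"
  then obtain c d where cd: "c \<in> M" "d \<in> M" "a - b = c - d" "y = f c - f d" by blast
  then have "a + d = c + b" by (simp add: algebra_simps)
  then have "f a + f d = f c + f b" using f_add assms cd by metis
  then have "f a - f b = f c - f d" by (metis add_diff_cancel_left' diff_diff_eq2)
  with cd show "y = f a - f b" by simp
qed

lemma gp_extension_eq: "m \<in> M \<Longrightarrow> f_gp m = f m"
  using gp_extension_diff_eq[of m 0] sharp_integral_monoidD(1)[OF M] f_0 by simp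

lemma gp_extension_add:
  assumes "x \<in> gp M" "y \<in> gp M"
  shows "f_gp (x + y) = f_gp x + f_gp y"
proof -
  obtain a b c d where abcd: "a \<in> M" "b \<in> M" "c \<in> M" "d \<in> M" "x = a - b" "y = c - d"
    using assms unfolding gp_def by blast
  then have "x + y = (a + c) - (b + d)" by (simp add: algebra_simps)
  then have "f_gp (x + y) = f (a + c) - f (b + d)"
    using gp_extension_diff_eq sharp_integral_monoidD(2)[OF M] abcd by metis
  also have "\<dots> = (f a - f b) + (f c - f d)" using f_add abcd by (simp add: algebra_simps)
  finally show ?thesis using gp_extension_diff_eq abcd by simp
qed

lemma gp_extension_diff:
  assumes "x \<in> gp M" "y \<in> gp M"
  shows "f_gp (x - y) = f_gp x - f_gp y"
  using gp_extension_add[OF gp_diff[OF M assms] assms(2)] by (simp add: algebra_simps)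

lemma gp_extension_mem:
  assumes "x \<in> gp M"
  shows "f_gp x \<in> gp N"
proof -
  obtain a b where "a \<in> M" "b \<in> M" "x = a - b" using assms unfolding gp_def by blast
  then show ?thesis using gp_extension_diff_eq f_mem unfolding gp_def by blast
qed

lemma gp_extension_inj:
  assumes "x \<in> gp M" "y \<in> gp M" "f_gp x = f_gp y"
  shows "x = y"
proof -
  obtain a b c d where abcd: "a \<in> M" "b \<in> M" "c \<in> M" "d \<in> M" "x = a - b" "y = c - d"
    using assms unfolding gp_def by blast
  then have "f a - f b = f c - f d" using gp_extension_diff_eq assms by simp
  then have "f (a + d) = f (c + b)" using f_add abcd by (simp add: algebra_simps)
  then have "a + d = c + b" using inj sharp_integral_monoidD(2)[OF M] abcd by (meson inj_on_def)
  then have "a - b = c - d" by (metis add_diff_cancel_left' diff_diff_eq2)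
  with abcd show ?thesis by simp
qed

lemma gp_extension_zmult:
  assumes "m \<in> M"
  shows "zmult k m \<in> gp M \<and> f_gp (zmult k m) = zmult k (f m)"
proof -
  have "m \<in> gp M" "0 \<in> gp M"
    using assms sharp_integral_monoidD(1)[OF M] subset_gp[OF M] by auto
  from zmult_mem_and_additive[of "gp M" f_gp, OF this(2) gp_add[OF M] gp_uminus gp_extension_add this(1)]
  show ?thesis using gp_extension_eq[OF assms] by simp
qed

end

section \<open>Rescaling edge lengths by an injective homomorphism\<close>

lemma metrised_hedgeD:
  assumes "metrised M X r i l" "e \<in> hedges X r"
  shows "e \<in> X" "i e \<in> X" "l e \<in> M" "l e \<noteq> 0" "r e \<in> verts X r" "r (i e) \<in> verts X r"
proof -
  have G: "is_graph X r i" using assms(1) by (simp add: metrised_def)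
  show e: "e \<in> X" and "i e \<in> X" using assms(2) G by (auto simp: hedges_def is_graph_def)
  then show "l e \<in> M" "l e \<noteq> 0" "r e \<in> verts X r" "r (i e) \<in> verts X r"
    using assms G unfolding metrised_def is_graph_def hedges_def verts_def by auto
qed

lemma (in monoid_embedding) metrised_comp: "metrised M X r i l \<Longrightarrow> metrised N X r i (f \<circ> l)"
  unfolding metrised_def using f_mem f_nonzero f_0 by auto

lemma PL_slopeE:
  assumes "g \<in> PL M X r i l" "e \<in> hedges X r"
  obtains k where "g (r e) - g (r (i e)) = zmult k (l e)"
  using assms unfolding PL_def cyc_def by blast

lemma laplacian_eq_if_same_slopes:
  assumes M: "sharp_integral_monoid M" "metrised M X r i l"
    and N: "sharp_integral_monoid N" "metrised N X r i l'"
    and slopes: "\<And>e. e \<in> hedges X r \<Longrightarrow> \<exists>k. g (r e) - g (r (i e)) = zmult k (l e)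
                                   \<and> g' (r e) - g' (r (i e)) = zmult k (l' e)"
  shows "laplacian X r i l' g' = laplacian X r i l g"
proof -
  have "zdiv (g' (r e) - g' (r (i e))) (l' e) = zdiv (g (r e) - g (r (i e))) (l e)"
    if e: "e \<in> hedges X r" for e
  proof -
    obtain k where "g (r e) - g (r (i e)) = zmult k (l e)" "g' (r e) - g' (r (i e)) = zmult k (l' e)"
      using slopes[OF e] by blast
    then show ?thesis
      using zdiv_zmult[OF M(1) metrised_hedgeD(3,4)[OF M(2) e]]
        zdiv_zmult[OF N(1) metrised_hedgeD(3,4)[OF N(2) e]] by simp
  qed
  then show ?thesis unfolding laplacian_def by (intro ext if_cong sum.cong) auto
qed

context monoid_embedding
begin

lemma PL_pushforward:
  assumes met: "metrised M X r i l" and g: "g \<in> PL M X r i l"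
  shows "\<exists>g'\<in>PL N X r i (f \<circ> l). laplacian X r i (f \<circ> l) g' = laplacian X r i l g"
proof
  define g' where "g' = (\<lambda>x. if x \<in> verts X r then f_gp (g x) else 0)"
  have g_gp: "g v \<in> gp M" if "v \<in> verts X r" for v
    using g that unfolding PL_def by blast
  have slopes: "\<exists>k. g (r e) - g (r (i e)) = zmult k (l e) \<and> g' (r e) - g' (r (i e)) = zmult k (f (l e))"
    if e: "e \<in> hedges X r" for e
  proof -
    note ends = metrised_hedgeD(5,6)[OF met e]
    obtain k where k: "g (r e) - g (r (i e)) = zmult k (l e)" using PL_slopeE[OF g e] .
    have "g' (r e) - g' (r (i e)) = f_gp (g (r e) - g (r (i e)))"
      using ends gp_extension_diff[OF g_gp g_gp] by (simp add: g'_def)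
    also have "\<dots> = zmult k (f (l e))"
      using k gp_extension_zmult[OF metrised_hedgeD(3)[OF met e]] by simp
    finally show ?thesis using k by blast
  qed
  show "g' \<in> PL N X r i (f \<circ> l)"
    unfolding PL_def cyc_def
  proof (intro CollectI conjI ballI allI impI)
    show "g' v \<in> gp N" if "v \<in> verts X r" for v
      using that g_gp gp_extension_mem by (simp add: g'_def)
    show "g' x = 0" if "x \<notin> verts X r" for x
      using that by (simp add: g'_def)
    show "\<exists>k. g' (r e) - g' (r (i e)) = zmult k ((f \<circ> l) e) \<and> True" if "e \<in> hedges X r" for e
      using slopes[OF that] by auto
  qed
  show "laplacian X r i (f \<circ> l) g' = laplacian X r i l g"
    using laplacian_eq_if_same_slopes[OF M met N metrised_comp[OF met]] slopes by simp
qed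

lemma PL_values_in_gp_extension_image:
  assumes met: "metrised M X r i l" and g': "g' \<in> PL N X r i (f \<circ> l)"
    and v0: "v0 \<in> verts X r" and v: "v \<in> verts X r"
  shows "\<exists>a\<in>gp M. f_gp a = g' v - g' v0"
proof -
  have "(v0, v) \<in> {(r e, r (i e)) | e. e \<in> hedges X r}\<^sup>*"
    using met v0 v unfolding metrised_def is_graph_def by blast
  then show ?thesis
  proof (induction rule: rtrancl_induct)
    case base
    then show ?case
      using subset_gp[OF M] sharp_integral_monoidD(1)[OF M] gp_extension_eq f_0 by force
  next
    case (step w u)
    then obtain e where e: "e \<in> hedges X r" "w = r e" "u = r (i e)" by blast
    obtain a where a: "a \<in> gp M" "f_gp a = g' w - g' v0" using step.IH by blast
    obtain k where k: "g' (r e) - g' (r (i e)) = zmult k (f (l e))"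
      using PL_slopeE[OF g' e(1)] by auto
    note z = gp_extension_zmult[OF metrised_hedgeD(3)[OF met e(1)], of k]
    have "f_gp (a - zmult k (l e)) = (g' w - g' v0) - (g' w - g' u)"
      using gp_extension_diff[OF a(1)] z a(2) k e by simp
    then show ?case using gp_diff[OF M a(1)] z by (force simp: algebra_simps)
  qed
qed

lemma PL_pullback:
  assumes met: "metrised M X r i l" and g': "g' \<in> PL N X r i (f \<circ> l)"
  shows "\<exists>g\<in>PL M X r i l. laplacian X r i l g = laplacian X r i (f \<circ> l) g'"
proof (cases "verts X r = {}")
  case True
  then have "hedges X r = {}" using metrised_hedgeD(5)[OF met] by blast
  with True have "(\<lambda>_. 0) \<in> PL M X r i l" unfolding PL_def by auto
  moreover have "laplacian X r i (f \<circ> l) g' = laplacian X r i l (\<lambda>_. 0)"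
    unfolding laplacian_def using True by simp
  ultimately show ?thesis by metis
next
  case False
  then obtain v0 where v0: "v0 \<in> verts X r" by blast
  define g where "g = (\<lambda>v. if v \<in> verts X r then SOME a. a \<in> gp M \<and> f_gp a = g' v - g' v0 else 0)"
  have g_gp: "g v \<in> gp M \<and> f_gp (g v) = g' v - g' v0" if "v \<in> verts X r" for v
  proof -
    have "\<exists>a. a \<in> gp M \<and> f_gp a = g' v - g' v0"
      using PL_values_in_gp_extension_image[OF met g' v0 that] by blast
    from someI_ex[OF this] show ?thesis using that unfolding g_def by simp
  qed
  have slopes: "\<exists>k. g (r e) - g (r (i e)) = zmult k (l e) \<and> g' (r e) - g' (r (i e)) = zmult k (f (l e))"
    if e: "e \<in> hedges X r" for e
  proof -
    note ends = metrised_hedgeD(5,6)[OF met e]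
    obtain k where k: "g' (r e) - g' (r (i e)) = zmult k (f (l e))"
      using PL_slopeE[OF g' e] by auto
    note z = gp_extension_zmult[OF metrised_hedgeD(3)[OF met e], of k]
    have "f_gp (g (r e) - g (r (i e))) = f_gp (zmult k (l e))"
      using gp_extension_diff g_gp[OF ends(1)] g_gp[OF ends(2)] k z by simp
    then have "g (r e) - g (r (i e)) = zmult k (l e)"
      using gp_extension_inj gp_diff[OF M] g_gp ends z by blast
    with k show ?thesis by blast
  qed
  have "g \<in> PL M X r i l"
    unfolding PL_def cyc_def
  proof (intro CollectI conjI ballI allI impI)
    show "g v \<in> gp M" if "v \<in> verts X r" for v
      using g_gp[OF that] by blast
    show "g x = 0" if "x \<notin> verts X r" for x
      using that by (simp add: g_def)
    show "\<exists>k. g (r e) - g (r (i e)) = zmult k (l e) \<and> True" if "e \<in> hedges X r" for e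
      using slopes[OF that] by auto
  qed
  moreover have "laplacian X r i (f \<circ> l) g' = laplacian X r i l g"
    using laplacian_eq_if_same_slopes[OF M met N metrised_comp[OF met]] slopes by simp
  ultimately show ?thesis by metis
qed

lemma rank_comp:
  assumes "metrised M X r i l"
  shows "rank N X r i (f \<circ> l) D = rank M X r i l D"
proof -
  have "laplacian X r i (f \<circ> l) ` PL N X r i (f \<circ> l) = laplacian X r i l ` PL M X r i l"
    using PL_pushforward[OF assms] PL_pullback[OF assms] by (auto simp: image_iff) metis+
  then show ?thesis unfolding rank_def lin_sys_def lin_equiv_def by simp
qed

end

section \<open>Renaming elements to singletons\<close>

definition singleton_lift :: "'a set \<Rightarrow> ('a \<Rightarrow> 'b::zero) \<Rightarrow> 'a set \<Rightarrow> 'b" where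
  "singleton_lift V E c = (if c \<in> (\<lambda>v. {v}) ` V then E (the_elem c) else 0)"

definition singleton_pull :: "('a set \<Rightarrow> 'b) \<Rightarrow> 'a \<Rightarrow> 'b" where
  "singleton_pull E x = E {x}"

lemma singleton_mem_image_iff [simp]: "{x} \<in> (\<lambda>v. {v}) ` V \<longleftrightarrow> x \<in> V"
  by auto

lemma singleton_lift_singleton [simp]: "singleton_lift V E {x} = (if x \<in> V then E x else 0)"
  by (auto simp: singleton_lift_def)

lemma singleton_lift_outside: "c \<notin> (\<lambda>v. {v}) ` V \<Longrightarrow> singleton_lift V E c = 0"
  by (simp add: singleton_lift_def)

lemma singleton_pull_lift: "(\<And>x. x \<notin> V \<Longrightarrow> E x = 0) \<Longrightarrow> singleton_pull (singleton_lift V E) = E"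
  by (auto simp: singleton_pull_def fun_eq_iff)

lemma singleton_lift_pull:
  "(\<And>c. c \<notin> (\<lambda>v. {v}) ` V \<Longrightarrow> E c = 0) \<Longrightarrow> singleton_lift V (singleton_pull E) = E"
  by (auto simp: singleton_pull_def singleton_lift_def fun_eq_iff)

lemma singleton_lift_diff:
  "singleton_lift V (E - F) = singleton_lift V E - singleton_lift V (F :: _ \<Rightarrow> 'b::ab_group_add)"
  by (auto simp: singleton_lift_def fun_eq_iff)

lemma singleton_pull_diff:
  "singleton_pull (E - F) = singleton_pull E - singleton_pull (F :: _ \<Rightarrow> 'b::ab_group_add)"
  by (auto simp: singleton_pull_def fun_eq_iff)

text \<open>This is the shape of an edge contraction that contracts nothing.\<close>

locale singleton_relabelling =
  fixes X :: "'a set" and r i :: "'a \<Rightarrow> 'a" and l :: "'a \<Rightarrow> 'h::ab_group_add"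
    and r' i' :: "'a set \<Rightarrow> 'a set" and l' :: "'a set \<Rightarrow> 'h"
  assumes graph: "is_graph X r i"
    and r': "\<And>x. x \<in> X \<Longrightarrow> r' {x} = {r x}"
    and i': "\<And>x. x \<in> X \<Longrightarrow> i' {x} = {i x}"
    and l': "\<And>x. x \<in> X \<Longrightarrow> l' {x} = l x"
begin

abbreviation "X' \<equiv> (\<lambda>x. {x}) ` X"
abbreviation "V \<equiv> verts X r"
abbreviation "lift \<equiv> singleton_lift V"
abbreviation "pull \<equiv> singleton_pull"

lemma verts_relabel: "verts X' r' = (\<lambda>v. {v}) ` V"
  using r' unfolding verts_def by auto

lemma hedges_relabel: "hedges X' r' = (\<lambda>e. {e}) ` hedges X r"
  unfolding hedges_def verts_relabel by (auto simp: verts_def)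

lemma hedgeD: "e \<in> hedges X r \<Longrightarrow> e \<in> X \<and> i e \<in> X \<and> r e \<in> V \<and> r (i e) \<in> V"
  using graph unfolding is_graph_def hedges_def verts_def by auto

lemma divisors_relabel: "divisors X' r' = {E. \<forall>c. c \<notin> (\<lambda>v. {v}) ` V \<longrightarrow> E c = 0}"
  unfolding divisors_def verts_relabel ..

lemma laplacian_relabel: "laplacian X' r' i' l' g' = lift (laplacian X r i l (pull g'))"
proof
  fix c
  show "laplacian X' r' i' l' g' c = lift (laplacian X r i l (pull g')) c"
  proof (cases "c \<in> (\<lambda>v. {v}) ` V")
    case False
    then show ?thesis unfolding laplacian_def verts_relabel by (simp add: singleton_lift_outside)
  next
    case True
    then obtain v where v: "v \<in> V" "c = {v}" by blast
    have star: "{e' \<in> hedges X' r'. r' e' = {v}} = (\<lambda>e. {e}) ` {e \<in> hedges X r. r e = v}"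
      unfolding hedges_relabel using hedgeD r' by force
    have "laplacian X' r' i' l' g' c
        = (\<Sum>e'\<in>{e' \<in> hedges X' r'. r' e' = {v}}. zdiv (g' {v} - g' (r' (i' e'))) (l' e'))"
      unfolding laplacian_def verts_relabel using v by simp
    also have "\<dots> = (\<Sum>e\<in>{e \<in> hedges X r. r e = v}. zdiv (g' {v} - g' (r' (i' {e}))) (l' {e}))"
      unfolding star by (subst sum.reindex) (auto simp: inj_on_def)
    also have "\<dots> = (\<Sum>e\<in>{e \<in> hedges X r. r e = v}. zdiv (pull g' v - pull g' (r (i e))) (l e))"
      using hedgeD r' i' l' by (intro sum.cong) (auto simp: singleton_pull_def)
    finally show ?thesis using v unfolding laplacian_def by simp
  qed
qed

lemma singleton_pull_PL: "g' \<in> PL N X' r' i' l' \<Longrightarrow> pull g' \<in> PL N X r i l"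
  unfolding PL_def verts_relabel hedges_relabel
  using hedgeD r' i' l' by (fastforce simp: singleton_pull_def)

lemma singleton_lift_PL: "g \<in> PL N X r i l \<Longrightarrow> lift g \<in> PL N X' r' i' l'"
  unfolding PL_def verts_relabel hedges_relabel
  using hedgeD r' i' l' by (auto simp: singleton_lift_outside)

end

context singleton_relabelling
begin

lemma singleton_lift_mem_divisors: "lift E \<in> divisors X' r'"
  unfolding divisors_relabel by (auto simp: singleton_lift_outside)

lemma singleton_pull_mem_divisors: "E' \<in> divisors X' r' \<Longrightarrow> pull E' \<in> divisors X r"
  unfolding divisors_def verts_relabel by (fastforce simp: singleton_pull_def)

lemma deg_relabel: "deg X' r' E' = deg X r (pull E')"
  unfolding deg_def verts_relabel by (subst sum.reindex) (auto simp: inj_on_def singleton_pull_def)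

lemma lin_sys_relabel_nonempty_iff:
  assumes D': "D' \<in> divisors X' r'"
  shows "lin_sys N X' r' i' l' D' \<noteq> {} \<longleftrightarrow> lin_sys N X r i l (pull D') \<noteq> {}"
proof
  assume "lin_sys N X' r' i' l' D' \<noteq> {}"
  then obtain E' g' where E': "E' \<in> divisors X' r'" "\<forall>v. 0 \<le> E' v" "g' \<in> PL N X' r' i' l'"
    "E' - D' = laplacian X' r' i' l' g'"
    unfolding lin_sys_def lin_equiv_def by blast
  have "pull E' - pull D' = pull (laplacian X' r' i' l' g')"
    unfolding singleton_pull_diff[symmetric] E'(4) ..
  also have "\<dots> = laplacian X r i l (pull g')"
    unfolding laplacian_relabel by (rule singleton_pull_lift) (simp add: laplacian_def)
  finally have "pull E' \<in> lin_sys N X r i l (pull D')"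
    unfolding lin_sys_def lin_equiv_def
    using singleton_pull_mem_divisors[OF E'(1)] E'(2) singleton_pull_PL[OF E'(3)]
    by (auto simp: singleton_pull_def)
  then show "lin_sys N X r i l (pull D') \<noteq> {}" by blast
next
  assume "lin_sys N X r i l (pull D') \<noteq> {}"
  then obtain E g where E: "\<forall>v. 0 \<le> E v" "g \<in> PL N X r i l" "E - pull D' = laplacian X r i l g"
    unfolding lin_sys_def lin_equiv_def by blast
  have g: "pull (lift g) = g"
    using E(2) by (intro singleton_pull_lift) (simp add: PL_def)
  have "lift E - D' = lift (E - pull D')"
    using D' singleton_lift_pull[of V D'] by (simp add: singleton_lift_diff divisors_relabel)
  also have "\<dots> = laplacian X' r' i' l' (lift g)"
    unfolding E(3) laplacian_relabel g ..
  finally have "lift E \<in> lin_sys N X' r' i' l' D'"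
    unfolding lin_sys_def lin_equiv_def
    using singleton_lift_mem_divisors E(1) singleton_lift_PL[OF E(2)]
    by (auto simp: singleton_lift_def)
  then show "lin_sys N X' r' i' l' D' \<noteq> {}" by blast
qed

lemma eff_divs_relabel: "pull ` eff_divs X' r' k = eff_divs X r k"
proof
  show "pull ` eff_divs X' r' k \<subseteq> eff_divs X r k"
    unfolding eff_divs_def
    using singleton_pull_mem_divisors deg_relabel by (auto simp: singleton_pull_def)
next
  show "eff_divs X r k \<subseteq> pull ` eff_divs X' r' k"
  proof
    fix F assume F: "F \<in> eff_divs X r k"
    then have "pull (lift F) = F"
      by (intro singleton_pull_lift) (simp add: eff_divs_def divisors_def)
    moreover have "lift F \<in> eff_divs X' r' k"
      using F singleton_lift_mem_divisors deg_relabel[of "lift F"] \<open>pull (lift F) = F\<close>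
      unfolding eff_divs_def by (auto simp: singleton_lift_def)
    ultimately show "F \<in> pull ` eff_divs X' r' k" by (metis image_eqI)
  qed
qed

lemma rank_relabel:
  assumes D: "D \<in> divisors X r"
  shows "rank N X' r' i' l' (lift D) = rank N X r i l D"
proof -
  have "pull (lift D - F') = D - pull F'" for F'
    using D by (simp add: singleton_pull_diff singleton_pull_lift divisors_def)
  moreover have "lift D - F' \<in> divisors X' r'" if "F' \<in> eff_divs X' r' k" for F' k
    using that singleton_lift_mem_divisors[of D] unfolding eff_divs_def divisors_def by auto
  ultimately have "(\<forall>F'\<in>eff_divs X' r' k. lin_sys N X' r' i' l' (lift D - F') \<noteq> {})
      \<longleftrightarrow> (\<forall>F\<in>pull ` eff_divs X' r' k. lin_sys N X r i l (D - F) \<noteq> {})" for k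
    using lin_sys_relabel_nonempty_iff by auto
  then show ?thesis unfolding rank_def eff_divs_relabel by simp
qed

end

section \<open>Edge contraction along an injective homomorphism\<close>

context monoid_embedding
begin

lemma contr_rel_eq_Id:
  assumes "metrised M X r i l"
  shows "contr_rel f X r i l = Id"
proof -
  have uncontracted: "{e \<in> hedges X r. f (l e) = 0} = {}"
    using metrised_hedgeD(3,4)[OF assms] f_nonzero by blast
  have "contr_rel f X r i l = (Id_on X)\<^sup>*"
    unfolding contr_rel_def Let_def uncontracted by simp
  also have "\<dots> = Id"
    using rtrancl_subset[of "{}" "Id_on X"] by auto
  finally show ?thesis .
qed

lemma contr_phi_eq: "metrised M X r i l \<Longrightarrow> contr_phi f X r i l x = {x}"
  unfolding contr_phi_def by (simp add: contr_rel_eq_Id)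

lemma contr_X_eq: "metrised M X r i l \<Longrightarrow> contr_X f X r i l = (\<lambda>x. {x}) ` X"
  unfolding contr_X_def quotient_def by (auto simp: contr_rel_eq_Id)

lemma push_eq_singleton_lift:
  assumes "metrised M X r i l"
  shows "push f X r i l D = singleton_lift (verts X r) D"
proof
  fix c
  have "{v \<in> verts X r. {v} = c} = (if c \<in> (\<lambda>v. {v}) ` verts X r then {the_elem c} else {})"
    by auto
  then show "push f X r i l D c = singleton_lift (verts X r) D c"
    unfolding push_def contr_phi_eq[OF assms] singleton_lift_def by simp
qed

lemma singleton_relabelling_contraction:
  assumes "metrised M X r i l"
  shows "singleton_relabelling X r i (f \<circ> l) (contr_r f X r i l) (contr_i f X r i l) (contr_l f X r i l)"
  using assms unfolding metrised_def
  by unfold_locales (simp_all add: contr_r_def contr_i_def contr_l_def contr_phi_eq[OF assms])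

end

theorem mainTheorem10:
  fixes M :: "'g::ab_group_add set" and N :: "'h::ab_group_add set"
    and X :: "'a set" and r i :: "'a \<Rightarrow> 'a" and l :: "'a \<Rightarrow> 'g"
    and f :: "'g \<Rightarrow> 'h" and D :: "'a \<Rightarrow> int"
  assumes "sharp_integral_monoid M" and "sharp_integral_monoid N"
    and "metrised M X r i l"
    and "monoid_hom M N f" and "inj_on f M"
    and "D \<in> divisors X r"
  shows "rank N (contr_X f X r i l) (contr_r f X r i l) (contr_i f X r i l) (contr_l f X r i l)
           (push f X r i l D)
         = rank M X r i l D"
proof -
  interpret monoid_embedding M N f
    using assms(1,2,4,5) by unfold_locales
  interpret singleton_relabelling X r i "f \<circ> l" "contr_r f X r i l" "contr_i f X r i l" "contr_l f X r i l"
    using singleton_relabelling_contraction[OF assms(3)] .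
  show ?thesis
    unfolding contr_X_eq[OF assms(3)] push_eq_singleton_lift[OF assms(3)]
    using rank_relabel[OF assms(6)] rank_comp[OF assms(3)] by simp
qed
end
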